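(* Let $k\geq 3$ and $n\geq 2k+1$, and write $A=A_n$. The complex $\partial B_A$ contains, as facets, all of the following sets: 1. $[i,i+1]\cup H\cup\{n-i+1\}$, where $1\leq i\leq \lfloor n/2\rfloor-k+1$ and $H\in\mathcal F_{2k-4}^{[i+2,n-i]}$; 2. $[i,i+1]\cup H\cup\{n-i-1\}$, where $1\leq i\leq \lfloor n/2\rfloor-k+1$ and $H\in\mathcal F_{2k-4}^{[i+2,n-i-2]}$; 3. $\{i+1\}\cup H\cup[n-i,n-i+1]$, where $1\leq i\leq \lfloor n/2\rfloor-k+1$ and $H\in\mathcal F_{2k-4}^{[i+2,n-i-1]}$; 4. $\{i\}\cup H\cup[n-i-1,n-i]$, where $1\leq i\leq \lfloor n/2\rfloor-k+1$ and $H\in\mathcal F_{2k-4}^{[i+2,n-i-2]}$; 5. $\{1\}\cup H\cup[n-1,n]$, where $H\in\mathcal F_{2k-4}^{[2,n-2]}$; 6. $\{\lfloor n/2\rfloor-k+2\}\cup H$, where $H\in\mathcal F_{2k-2}^{[\lfloor n/2\rfloor-k+3,\ \lceil n/2\rceil+k]}$.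
   Context: For integers $m\leq n$, $[m,n]=\{m,m+1,\dots,n\}$. For $j\geq 1$, $\mathcal F_{2j}^{[m,n]}$ is the set of all $2j$-sets of the form $\{i_1,i_1+1,i_2,i_2+1,\dots,i_j,i_j+1\}$ with $m\leq i_1$, $i_j+1\leq n$, and $i_t\leq i_{t+1}-2$ for $1\leq t\leq j-1$. It is partially ordered by $\leq_p$: for $2j$-sets $X=\{x_1<\dots<x_{2j}\}$, $Y=\{y_1<\dots<y_{2j}\}$, $X\leq_p Y$ iff $x_t\leq y_t$ for all $t$. For an antichain $S$ of $\mathcal F_{2k}^{[1,n]}$, $B(S)$ is the pure simplicial complex whose facets are the elements of the order ideal of $(\mathcal F_{2k}^{[1,n]},\leq_p)$ generated by $S$. Let $S-\mathbf 1_{2k}=\{\{x_1-1,x_1,\dots,x_k-1,x_k\}:\{x_1,x_1+1,\dots,x_k,x_k+1\}\in S,\ x_1>1\}$, and let $B_S$ be the pure complex whose facets are the facets of $B(S)$ that are not facets of $B(S-\mathbf 1_{2k})$; $B_S$ is a PL $(2k-1)$-ball and $\partial B_S$ (the complex generated by the $(2k-2)$-faces of $B_S$ lying in exactly one facet of $B_S$) is a PL $(2k-2)$-sphere. Fix $k\geq3$ and define the antichain $A_n=\{F_1,\dots,F_{\lfloor n/2\rfloor-k+1}\}$ with $F_i=[i,i+1]\cup[n-2k+4-i,\,n-i+1]$. *)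

theory Defs
  imports Main
begin

text \<open>The family F_{2j}^{[m,n]}: sets {i_1,i_1+1,...,i_j,i_j+1} with m <= i_1,
  i_j + 1 <= n and i_t <= i_{t+1} - 2. Parameter j is half the cardinality.\<close>
definition Fam :: "nat \<Rightarrow> nat \<Rightarrow> nat \<Rightarrow> nat set set" where
  "Fam j m n = {X. \<exists>xs :: nat list. length xs = j \<and> 0 < j \<and>
      m \<le> hd xs \<and> last xs + 1 \<le> n \<and>
      (\<forall>t. Suc t < j \<longrightarrow> xs ! t + 2 \<le> xs ! Suc t) \<and>
      X = (\<Union>t<j. {xs ! t, xs ! t + 1})}"

definition leq_p :: "nat set \<Rightarrow> nat set \<Rightarrow> bool" where
  "leq_p X Y \<longleftrightarrow> card X = card Y \<and>
     (\<forall>t < card X. sorted_list_of_set X ! t \<le> sorted_list_of_set Y ! t)"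

text \<open>Facets of B(S): the order ideal of (F_{2k}^{[1,n]}, leq_p) generated by S.\<close>
definition B_facets :: "nat \<Rightarrow> nat \<Rightarrow> nat set set \<Rightarrow> nat set set" where
  "B_facets k n S = {X \<in> Fam k 1 n. \<exists>Y \<in> S. leq_p X Y}"

definition shift_down :: "nat set set \<Rightarrow> nat set set" where
  "shift_down S = {(\<lambda>x. x - 1) ` X | X. X \<in> S \<and> Min X > 1}"

definition BS_facets :: "nat \<Rightarrow> nat \<Rightarrow> nat set set \<Rightarrow> nat set set" where
  "BS_facets k n S = B_facets k n S - B_facets k n (shift_down S)"

definition bdry_facets :: "nat set set \<Rightarrow> nat set set" where
  "bdry_facets Fs = {G. (\<exists>F\<in>Fs. G \<subseteq> F \<and> card G + 1 = card F) \<and>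
                        card {F \<in> Fs. G \<subseteq> F} = 1}"

definition A_anti :: "nat \<Rightarrow> nat \<Rightarrow> nat set set" where
  "A_anti k n = {{i, i+1} \<union> {n + 4 - 2*k - i .. n - i + 1} | i. 1 \<le> i \<and> i \<le> n div 2 - k + 1}"

end

theory Submission
  imports Defs
begin

text \<open>
  The members of \<open>Fam\<close> are exactly the paired sets of the right size and range, and the Gale
  order is comparison of counting functions.  Hence a paired \<open>2k\<close>-set lies in \<open>B(A)\<close> iff for some
  \<open>1 \<le> i \<le> \<lfloor>n/2\<rfloor> - k + 1\<close> its minimum is at most \<open>i\<close> and its maximum at most \<open>n + 1 - i\<close>, and in
  \<open>B(A - 1)\<close> iff for some \<open>2 \<le> i \<le> \<lfloor>n/2\<rfloor> - k + 1\<close> its minimum is below \<open>i\<close> and its maximum at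
  most \<open>n - i\<close>.  Each listed set \<open>G\<close> has \<open>2k - 1\<close> elements, and there is exactly one \<open>x\<close> making
  \<open>G \<union> {x}\<close> a facet of \<open>B\<^sub>A\<close>: inside the range of \<open>G\<close> the parity of ranks in the paired set
  \<open>G \<union> {x}\<close> determines \<open>x\<close>, and outside it the two window conditions exclude \<open>x\<close>.
\<close>

definition rank :: "nat set \<Rightarrow> nat \<Rightarrow> nat" where
  "rank X y = card {z\<in>X. z < y}"

text \<open>In increasing order, every element in an even position is followed by its successor;
  for finite sets this says that the set is a disjoint union of blocks \<open>{a, a + 1}\<close>.\<close>
definition paired :: "nat set \<Rightarrow> bool" where
  "paired X \<longleftrightarrow> (\<forall>y\<in>X. even (rank X y) \<longrightarrow> Suc y \<in> X)"

lemma rank_above_all: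
  assumes "\<forall>z\<in>X. z < y"
  shows "rank X y = card X"
  unfolding rank_def using assms by (metis (mono_tags, lifting) Collect_cong Collect_mem_eq)

lemma paired_Suc_mem: "paired X \<Longrightarrow> y \<in> X \<Longrightarrow> even (rank X y) \<Longrightarrow> Suc y \<in> X"
  unfolding paired_def by blast

lemma paired_Suc_Min:
  assumes "paired X" "x \<in> X" "\<forall>z\<in>X. x \<le> z"
  shows "Suc x \<in> X"
proof -
  have "rank X x = 0" unfolding rank_def using assms(3) by (simp add: not_less)
  then show ?thesis using paired_Suc_mem[OF assms(1,2)] by simp
qed

lemma paired_insert_below_eq:
  assumes "paired (insert x G)" "x < a" "\<forall>z\<in>G. a \<le> z"
  shows "Suc x = a"
proof -
  have "Suc x \<in> insert x G" using paired_Suc_Min[OF assms(1)] assms(2,3) by fastforce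
  then show ?thesis using assms(2,3) by fastforce
qed

text \<open>A gap of a paired set never splits one of its blocks.\<close>
lemma paired_even_rank_notin:
  assumes "finite X" "paired X" "y \<notin> X"
  shows "even (rank X y)"
proof (rule ccontr)
  assume odd: "odd (rank X y)"
  let ?B = "{z\<in>X. z < y}"
  have ne: "?B \<noteq> {}" using odd unfolding rank_def by (metis card.empty even_zero)
  have fin: "finite ?B" using assms(1) by simp
  have w: "Max ?B \<in> ?B" "\<And>z. z \<in> ?B \<Longrightarrow> z \<le> Max ?B"
    using Max_in[OF fin ne] Max_ge[OF fin] by auto
  have "{z\<in>X. z < Max ?B} = ?B - {Max ?B}" using w by fastforce
  then have "Suc (rank X (Max ?B)) = rank X y"
    unfolding rank_def using card_Suc_Diff1[OF fin w(1)] by simp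
  then have "even (rank X (Max ?B))" using odd by presburger
  then have "Suc (Max ?B) \<in> X" using paired_Suc_mem[OF assms(2)] w(1) by blast
  moreover have "Suc (Max ?B) \<notin> ?B" using w(2) by fastforce
  ultimately have "Suc (Max ?B) = y" using w(1) by auto
  then show False using assms(3) \<open>Suc (Max ?B) \<in> X\<close> by simp
qed

lemma paired_even_card:
  assumes "finite X" "paired X"
  shows "even (card X)"
proof -
  obtain y where y: "\<forall>z\<in>X. z < y" using assms(1) finite_nat_set_iff_bounded by blast
  then have "rank X y = card X" by (rule rank_above_all)
  moreover have "y \<notin> X" using y by blast
  ultimately show ?thesis using paired_even_rank_notin[OF assms, of y] by simp
qed

lemma paired_Un:
  assumes "finite P" "paired P" "paired Q" "\<forall>p\<in>P. \<forall>q\<in>Q. p < q"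
  shows "paired (P \<union> Q)"
  unfolding paired_def
proof (intro ballI impI)
  fix y assume y: "y \<in> P \<union> Q" and ev: "even (rank (P \<union> Q) y)"
  show "Suc y \<in> P \<union> Q"
  proof (cases "y \<in> P")
    case True
    have "{z\<in>P \<union> Q. z < y} = {z\<in>P. z < y}" using True assms(4) by fastforce
    then show ?thesis using ev True paired_Suc_mem[OF assms(2)] by (simp add: rank_def)
  next
    case False
    then have "y \<in> Q" using y by simp
    have "{z\<in>P \<union> Q. z < y} = P \<union> {z\<in>Q. z < y}" using \<open>y \<in> Q\<close> assms(4) by fastforce
    moreover have "P \<inter> {z\<in>Q. z < y} = {}" using assms(4) by fastforce
    ultimately have "rank (P \<union> Q) y = card P + rank Q y"
      unfolding rank_def using assms(1) by (simp add: card_Un_disjoint)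
    then show ?thesis
      using ev paired_even_card[OF assms(1,2)] paired_Suc_mem[OF assms(3) \<open>y \<in> Q\<close>] by simp
  qed
qed

lemma paired_pair: "paired {a, Suc a}"
proof -
  have "{z\<in>{a, Suc a}. z < Suc a} = {a}" by auto
  then show ?thesis unfolding paired_def rank_def by auto
qed

lemma paired_of_pair_Un:
  assumes "finite Y" "paired ({a, Suc a} \<union> Y)" "\<forall>y\<in>Y. Suc a < y"
  shows "paired Y"
  unfolding paired_def
proof (intro ballI impI)
  fix y assume "y \<in> Y" and ev: "even (rank Y y)"
  have "{z\<in>{a, Suc a} \<union> Y. z < y} = {a, Suc a} \<union> {z\<in>Y. z < y}"
    using \<open>y \<in> Y\<close> assms(3) by fastforce
  moreover have "card ({a, Suc a} \<union> {z\<in>Y. z < y}) = card {z\<in>Y. z < y} + 2"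
    using assms(1,3) by (subst card_Un_disjoint) auto
  ultimately have "rank ({a, Suc a} \<union> Y) y = rank Y y + 2" unfolding rank_def by simp
  then have "Suc y \<in> {a, Suc a} \<union> Y" using ev paired_Suc_mem[OF assms(2)] \<open>y \<in> Y\<close> by simp
  then show "Suc y \<in> Y" using \<open>y \<in> Y\<close> assms(3) by auto
qed

lemma paired_split_Min:
  assumes "finite X" "X \<noteq> {}" "paired X"
  obtains a Y where "X = {a, Suc a} \<union> Y" "\<forall>y\<in>Y. Suc a < y" "a \<in> X" "paired Y"
proof -
  let ?a = "Min X"
  have a: "?a \<in> X" "\<forall>z\<in>X. ?a \<le> z" using assms(1,2) by auto
  then have "Suc ?a \<in> X" using paired_Suc_Min[OF assms(3)] by blast
  then have X: "X = {?a, Suc ?a} \<union> (X - {?a, Suc ?a})" using a by auto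
  moreover have above: "\<forall>y\<in>X - {?a, Suc ?a}. Suc ?a < y" using a(2) by fastforce
  moreover have "paired (X - {?a, Suc ?a})"
    using paired_of_pair_Un[OF _ _ above] X assms(1,3) by simp
  ultimately show thesis using that a(1) by blast
qed

lemma greatest_gap_below:
  fixes y L :: nat
  assumes "y < L" "y \<notin> P"
  obtains x0 where "y \<le> x0" "x0 < L" "x0 \<notin> P" "\<forall>z. x0 < z \<longrightarrow> z < L \<longrightarrow> z \<in> P"
proof -
  have "\<exists>x0. (x0 < L \<and> x0 \<notin> P) \<and> (\<forall>z. z < L \<and> z \<notin> P \<longrightarrow> z \<le> x0)"
    by (rule Nat.ex_has_greatest_nat[of _ y L]) (use assms in auto)
  then obtain x0 where x0: "x0 < L" "x0 \<notin> P" "\<forall>z. z < L \<and> z \<notin> P \<longrightarrow> z \<le> x0" by blast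
  show thesis
  proof (rule that[OF _ x0(1,2)])
    show "y \<le> x0" using x0(3) assms by blast
    show "\<forall>z. x0 < z \<longrightarrow> z < L \<longrightarrow> z \<in> P" using x0(3) leD by blast
  qed
qed

lemma least_gap_above:
  fixes S y :: nat
  assumes "S < y" "y \<notin> P"
  obtains x0 where "S < x0" "x0 \<le> y" "x0 \<notin> P" "\<forall>z. S < z \<longrightarrow> z < x0 \<longrightarrow> z \<in> P"
proof -
  let ?x0 = "LEAST z. S < z \<and> z \<notin> P"
  have "S < ?x0 \<and> ?x0 \<notin> P" by (rule LeastI[of _ y]) (use assms in auto)
  moreover have "?x0 \<le> y" by (rule Least_le) (use assms in auto)
  moreover have "\<forall>z. S < z \<longrightarrow> z < ?x0 \<longrightarrow> z \<in> P" using not_less_Least by blast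
  ultimately show thesis using that by blast
qed

lemma paired_insert_gap_below:
  assumes P: "finite P" "paired P" "\<forall>p\<in>P. p < L"
    and gap: "x0 < L" "x0 \<notin> P" "\<forall>z. x0 < z \<longrightarrow> z < L \<longrightarrow> z \<in> P"
  shows "paired (insert x0 (insert L P))" (is "paired ?Z")
  unfolding paired_def
proof (intro ballI impI)
  fix y assume y: "y \<in> ?Z" and ev: "even (rank ?Z y)"
  consider "y < x0" | "x0 \<le> y" "y < L" | "y = L" using y P(3) gap(1) by fastforce
  then show "Suc y \<in> ?Z"
  proof cases
    case 1
    then have "y \<in> P" "{z\<in>?Z. z < y} = {z\<in>P. z < y}" using y gap(1) by auto
    then show ?thesis using ev paired_Suc_mem[OF P(2)] by (simp add: rank_def)
  next
    case 2
    then show ?thesis using gap(3) by (cases "Suc y = L") auto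
  next
    case 3
    have "L \<notin> P" using P(3) by blast
    have "{z\<in>?Z. z < L} = insert x0 P" using P(3) gap(1) by auto
    then have "rank ?Z y = Suc (card P)" using 3 P(1) gap(2) by (simp add: rank_def)
    then show ?thesis using ev paired_even_card[OF P(1,2)] by simp
  qed
qed

lemma paired_insert_gap_below_unique:
  assumes P: "finite P" "paired P" "\<forall>p\<in>P. p < L"
    and gap: "x0 < L" "x0 \<notin> P" "\<forall>z. x0 < z \<longrightarrow> z < L \<longrightarrow> z \<in> P"
    and x: "x < L" "x \<notin> P" "paired (insert x (insert L P))"
  shows "x = x0"
proof (rule ccontr)
  let ?F = "insert x (insert L P)"
  assume "x \<noteq> x0"
  have "x < x0"
  proof (rule ccontr)
    assume "\<not> x < x0"
    then have "x0 < x" using \<open>x \<noteq> x0\<close> by simp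
    then show False using gap(3) x(1,2) by blast
  qed
  then have "{z\<in>?F. z < x0} = insert x {z\<in>P. z < x0}" using gap(1) by auto
  then have "rank ?F x0 = Suc (rank P x0)" using P(1) x(2) by (simp add: rank_def)
  moreover have "x0 \<notin> ?F" using gap(1,2) \<open>x \<noteq> x0\<close> by auto
  then have "even (rank ?F x0)" using paired_even_rank_notin[OF _ x(3)] P(1) by simp
  ultimately show False using paired_even_rank_notin[OF P(1,2) gap(2)] by simp
qed

lemma paired_insert_gap_above:
  assumes P: "finite P" "paired P" "\<forall>p\<in>P. S < p"
    and gap: "S < x0" "x0 \<notin> P" "\<forall>z. S < z \<longrightarrow> z < x0 \<longrightarrow> z \<in> P"
  shows "paired (insert x0 (insert S P))" (is "paired ?Z")
  unfolding paired_def
proof (intro ballI impI)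
  fix y assume y: "y \<in> ?Z" and ev: "even (rank ?Z y)"
  consider "y < x0" | "y = x0" | "x0 < y" by linarith
  then show "Suc y \<in> ?Z"
  proof cases
    case 1
    then have "S \<le> y" using y P(3) gap(1) by fastforce
    then show ?thesis using 1 gap(3) by (cases "Suc y = x0") auto
  next
    case 2
    have "{z\<in>?Z. z < x0} = insert S {z\<in>P. z < x0}" using gap(1) by auto
    moreover have "S \<notin> P" using P(3) by blast
    ultimately have "rank ?Z y = Suc (rank P x0)" using 2 P(1) by (simp add: rank_def)
    then show ?thesis using ev paired_even_rank_notin[OF P(1,2) gap(2)] by simp
  next
    case 3
    then have "y \<in> P" using y gap(1) by auto
    have "{z\<in>?Z. z < y} = insert S (insert x0 {z\<in>P. z < y})" using 3 gap(1) \<open>y \<in> P\<close> P(3) by auto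
    moreover have "S \<notin> P" using P(3) by blast
    ultimately have "rank ?Z y = Suc (Suc (rank P y))" using P(1) gap(1,2) by (simp add: rank_def)
    then show ?thesis using ev paired_Suc_mem[OF P(2) \<open>y \<in> P\<close>] by simp
  qed
qed

lemma paired_insert_gap_above_unique:
  assumes P: "finite P" "paired P" "\<forall>p\<in>P. S < p"
    and gap: "S < x0" "x0 \<notin> P" "\<forall>z. S < z \<longrightarrow> z < x0 \<longrightarrow> z \<in> P"
    and x: "S < x" "x \<notin> P" "paired (insert x (insert S P))"
  shows "x = x0"
proof (rule ccontr)
  let ?F = "insert x (insert S P)"
  assume "x \<noteq> x0"
  have "x0 < x"
  proof (rule ccontr)
    assume "\<not> x0 < x"
    then have "x < x0" using \<open>x \<noteq> x0\<close> by simp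
    then show False using gap(3) x(1,2) by blast
  qed
  then have "{z\<in>?F. z < x0} = insert S {z\<in>P. z < x0}" using gap(1) by auto
  moreover have "S \<notin> P" using P(3) by blast
  ultimately have "rank ?F x0 = Suc (rank P x0)" using P(1) by (simp add: rank_def)
  moreover have "x0 \<notin> ?F" using gap(1,2) \<open>x \<noteq> x0\<close> by auto
  then have "even (rank ?F x0)" using paired_even_rank_notin[OF _ x(3)] P(1) by simp
  ultimately show False using paired_even_rank_notin[OF P(1,2) gap(2)] by simp
qed

lemma paired_completion_below:
  assumes P: "finite P" "paired P" "\<forall>p\<in>P. p < L" and y: "y < L" "y \<notin> P"
  obtains x0 where "y \<le> x0" "x0 < L" "x0 \<notin> P" "L - 1 \<in> insert x0 P"
    "paired (insert x0 (insert L P))"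
    "\<And>x. x < L \<Longrightarrow> x \<notin> P \<Longrightarrow> paired (insert x (insert L P)) \<Longrightarrow> x = x0"
proof -
  obtain x0 where x0: "y \<le> x0" "x0 < L" "x0 \<notin> P" and gap: "\<forall>z. x0 < z \<longrightarrow> z < L \<longrightarrow> z \<in> P"
    using y by (rule greatest_gap_below)
  have "L - 1 \<in> insert x0 P" using gap x0(2) by (cases "x0 = L - 1") auto
  then show thesis
    using that[OF x0] paired_insert_gap_below[OF P x0(2,3) gap]
      paired_insert_gap_below_unique[OF P x0(2,3) gap] by blast
qed

lemma paired_completion_above:
  assumes P: "finite P" "paired P" "\<forall>p\<in>P. S < p" and y: "S < y" "y \<notin> P"
  obtains x0 where "S < x0" "x0 \<le> y" "x0 \<notin> P" "paired (insert x0 (insert S P))"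
    "\<And>x. S < x \<Longrightarrow> x \<notin> P \<Longrightarrow> paired (insert x (insert S P)) \<Longrightarrow> x = x0"
proof -
  obtain x0 where x0: "S < x0" "x0 \<le> y" "x0 \<notin> P" and gap: "\<forall>z. S < z \<longrightarrow> z < x0 \<longrightarrow> z \<in> P"
    using y by (rule least_gap_above)
  then show thesis
    using that[OF x0] paired_insert_gap_above[OF P x0(1,3) gap]
      paired_insert_gap_above_unique[OF P x0(1,3) gap] by blast
qed

lemma pairs_Cons:
  "(\<Union>t<Suc (length ys). {(a # ys) ! t, (a # ys) ! t + 1}) = {a, Suc a} \<union> (\<Union>t<length ys. {ys ! t, ys ! t + 1})"
  by (simp add: lessThan_Suc_eq_insert_0 insert_commute)

lemma Fam_one_iff: "X \<in> Fam 1 m n \<longleftrightarrow> (\<exists>a. m \<le> a \<and> Suc a \<le> n \<and> X = {a, Suc a})"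
proof
  assume "X \<in> Fam 1 m n"
  then obtain xs where "length xs = 1" "m \<le> hd xs" "last xs + 1 \<le> n" "X = {xs ! 0, xs ! 0 + 1}"
    unfolding Fam_def by auto
  then show "\<exists>a. m \<le> a \<and> Suc a \<le> n \<and> X = {a, Suc a}"
    by (cases xs) auto
next
  assume "\<exists>a. m \<le> a \<and> Suc a \<le> n \<and> X = {a, Suc a}"
  then obtain a where "m \<le> a" "Suc a \<le> n" "X = {a, Suc a}" by blast
  then show "X \<in> Fam 1 m n"
    unfolding Fam_def by (intro CollectI exI[of _ "[a]"]) (simp add: lessThan_Suc)
qed

lemma Fam_Suc_iff:
  assumes "0 < j"
  shows "X \<in> Fam (Suc j) m n \<longleftrightarrow> (\<exists>a Y. m \<le> a \<and> Y \<in> Fam j (a + 2) n \<and> X = {a, Suc a} \<union> Y)"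
proof
  assume "X \<in> Fam (Suc j) m n"
  then obtain xs where xs: "length xs = Suc j" "m \<le> hd xs" "last xs + 1 \<le> n"
    "\<forall>t. Suc t < Suc j \<longrightarrow> xs ! t + 2 \<le> xs ! Suc t" "X = (\<Union>t<Suc j. {xs ! t, xs ! t + 1})"
    unfolding Fam_def by blast
  then obtain a ys where a: "xs = a # ys" "length ys = j" by (cases xs) auto
  have ys: "ys \<noteq> []" using a(2) assms by auto
  have "a + 2 \<le> hd ys" using xs(4)[rule_format, of 0] a ys assms by (simp add: hd_conv_nth)
  moreover have "last ys + 1 \<le> n" using xs(3) a(1) ys by simp
  moreover have "\<forall>t. Suc t < j \<longrightarrow> ys ! t + 2 \<le> ys ! Suc t"
    using xs(4) a by (metis Suc_less_eq nth_Cons_Suc)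
  ultimately have "(\<Union>t<j. {ys ! t, ys ! t + 1}) \<in> Fam j (a + 2) n"
    unfolding Fam_def using a(2) assms by blast
  moreover have "X = {a, Suc a} \<union> (\<Union>t<j. {ys ! t, ys ! t + 1})"
    using xs(5) pairs_Cons[of a ys] a by simp
  ultimately show "\<exists>a Y. m \<le> a \<and> Y \<in> Fam j (a + 2) n \<and> X = {a, Suc a} \<union> Y"
    using xs(2) a(1) by auto
next
  assume "\<exists>a Y. m \<le> a \<and> Y \<in> Fam j (a + 2) n \<and> X = {a, Suc a} \<union> Y"
  then obtain a ys where ys: "m \<le> a" "length ys = j" "a + 2 \<le> hd ys" "last ys + 1 \<le> n"
    "\<forall>t. Suc t < j \<longrightarrow> ys ! t + 2 \<le> ys ! Suc t" "X = {a, Suc a} \<union> (\<Union>t<j. {ys ! t, ys ! t + 1})"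
    unfolding Fam_def by blast
  have ne: "ys \<noteq> []" using ys(2) assms by auto
  have "\<forall>t. Suc t < Suc j \<longrightarrow> (a # ys) ! t + 2 \<le> (a # ys) ! Suc t"
  proof (intro allI impI)
    fix t assume "Suc t < Suc j"
    then show "(a # ys) ! t + 2 \<le> (a # ys) ! Suc t"
      using ys(3,5) ne by (cases t) (auto simp: hd_conv_nth)
  qed
  moreover have "X = (\<Union>t<Suc j. {(a # ys) ! t, (a # ys) ! t + 1})"
    using ys(6) pairs_Cons[of a ys] ys(2) by simp
  ultimately show "X \<in> Fam (Suc j) m n"
    unfolding Fam_def using ys ne by (intro CollectI exI[of _ "a # ys"]) auto
qed

lemma Fam_pos: "X \<in> Fam j m n \<Longrightarrow> 0 < j"
  unfolding Fam_def by blast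

lemma FamD:
  assumes "X \<in> Fam j m n"
  shows "finite X \<and> card X = 2 * j \<and> X \<subseteq> {m..n} \<and> paired X"
  using Fam_pos[OF assms] assms
proof (induction j arbitrary: X m rule: nat_induct_non_zero)
  case 1
  then obtain a where "m \<le> a" "Suc a \<le> n" "X = {a, Suc a}" unfolding Fam_one_iff by blast
  then show ?case using paired_pair by auto
next
  case (Suc j)
  obtain a Y where a: "m \<le> a" "X = {a, Suc a} \<union> Y" and "Y \<in> Fam j (a + 2) n"
    using Suc.prems unfolding Fam_Suc_iff[OF Suc.hyps] by blast
  then have Y: "finite Y" "card Y = 2 * j" "Y \<subseteq> {a + 2..n}" "paired Y" using Suc.IH by blast+
  then have "Y \<noteq> {}" using Suc.hyps by auto
  then have "Suc a \<le> n" using Y(3) by auto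
  moreover have "card X = 2 + card Y" using a(2) Y(1,3) by (subst a(2), subst card_Un_disjoint) auto
  moreover have "paired X" unfolding a(2) using Y by (intro paired_Un paired_pair) auto
  ultimately show ?case using a Y by auto
qed

lemma FamI:
  assumes "0 < j" "finite X" "card X = 2 * j" "X \<subseteq> {m..n}" "paired X"
  shows "X \<in> Fam j m n"
  using assms
proof (induction j arbitrary: X m rule: nat_induct_non_zero)
  case 1
  then have "X \<noteq> {}" by auto
  then obtain a Y where a: "X = {a, Suc a} \<union> Y" "\<forall>y\<in>Y. Suc a < y" "a \<in> X" "paired Y"
    using 1 by (elim paired_split_Min) auto
  have "card X = 2 + card Y" using a 1 by (subst a(1), subst card_Un_disjoint) auto
  then have "X = {a, Suc a}" using a(1) 1 by auto
  then show ?case using 1 unfolding Fam_one_iff by auto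
next
  case (Suc j)
  then have "X \<noteq> {}" by auto
  then obtain a Y where a: "X = {a, Suc a} \<union> Y" "\<forall>y\<in>Y. Suc a < y" "a \<in> X" "paired Y"
    using Suc.prems by (elim paired_split_Min) auto
  have "card X = 2 + card Y" using a(1,2) Suc.prems by (subst a(1), subst card_Un_disjoint) auto
  moreover have "Y \<subseteq> {a + 2..n}" using a(1,2) Suc.prems by force
  ultimately have "Y \<in> Fam j (a + 2) n" using Suc.IH a(1,4) Suc.prems by simp
  then show ?case unfolding Fam_Suc_iff[OF Suc.hyps] using a Suc.prems by auto
qed

lemma Fam_mono: "X \<in> Fam j m n \<Longrightarrow> m' \<le> m \<Longrightarrow> n \<le> n' \<Longrightarrow> X \<in> Fam j m' n'"
  using FamD[of X j m n] Fam_pos[of X j m n] by (intro FamI) auto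

lemma Fam_pair_Un:
  assumes "Y \<in> Fam j b n" "Suc a < b"
  shows "{a, Suc a} \<union> Y \<in> Fam (Suc j) a n"
proof -
  have Y: "finite Y" "card Y = 2 * j" "Y \<subseteq> {b..n}" "paired Y" "0 < j"
    using FamD[OF assms(1)] Fam_pos[OF assms(1)] by auto
  then have "Y \<noteq> {}" by auto
  then have "Suc a \<le> n" using Y(3) assms(2) by auto
  moreover have "card ({a, Suc a} \<union> Y) = 2 + card Y" using Y(1,3) assms(2) by (subst card_Un_disjoint) auto
  moreover have "paired ({a, Suc a} \<union> Y)" using Y assms(2) by (intro paired_Un paired_pair) auto
  ultimately show ?thesis using Y assms(2) by (intro FamI) auto
qed

lemma Fam_Un_pair:
  assumes "Y \<in> Fam j m b" "b < c"
  shows "Y \<union> {c, Suc c} \<in> Fam (Suc j) m (Suc c)"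
proof -
  have Y: "finite Y" "card Y = 2 * j" "Y \<subseteq> {m..b}" "paired Y" "0 < j"
    using FamD[OF assms(1)] Fam_pos[OF assms(1)] by auto
  then have "Y \<noteq> {}" by auto
  then have "m \<le> c" using Y(3) assms(2) by auto
  moreover have "card (Y \<union> {c, Suc c}) = card Y + 2" using Y(1,3) assms(2) by (subst card_Un_disjoint) auto
  moreover have "paired (Y \<union> {c, Suc c})" using Y assms(2) by (intro paired_Un paired_pair) auto
  ultimately show ?thesis using Y assms(2) by (intro FamI) auto
qed

lemma card_less_nth_sorted_list_of_set:
  assumes "finite X" "q < card X"
  shows "card {z\<in>X. z < sorted_list_of_set X ! q} = q"
proof -
  let ?s = "sorted_list_of_set X"
  have s: "sorted_wrt (<) ?s" "length ?s = card X" "set ?s = X" "distinct ?s"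
    using assms(1) by auto
  have "{z\<in>X. z < ?s ! q} = set (take q ?s)"
  proof (intro set_eqI iffI)
    fix z assume z: "z \<in> {z\<in>X. z < ?s ! q}"
    then have "z \<in> set ?s" using s(3) by simp
    then obtain p where p: "p < length ?s" "?s ! p = z" by (auto simp: in_set_conv_nth)
    have "p < q"
    proof (rule ccontr)
      assume "\<not> p < q"
      then have "?s ! q \<le> ?s ! p" using sorted_nth_mono[of ?s q p] p(1) by simp
      then show False using z p(2) by auto
    qed
    then show "z \<in> set (take q ?s)" using p by (auto simp: in_set_conv_nth intro!: exI[of _ p])
  next
    fix z assume "z \<in> set (take q ?s)"
    then obtain p where p: "p < q" "?s ! p = z" using assms(2) s(2) by (auto simp: in_set_conv_nth)
    then show "z \<in> {z\<in>X. z < ?s ! q}"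
      using sorted_wrt_nth_less[OF s(1) p(1)] nth_mem[of p ?s] assms(2) s(2,3) by auto
  qed
  then show ?thesis using assms(2) s(2,4) by (simp add: distinct_card)
qed

lemma nth_sorted_list_of_set_le_iff:
  assumes "finite X" "t < card X"
  shows "sorted_list_of_set X ! t \<le> v \<longleftrightarrow> t < card {z\<in>X. z \<le> v}"
proof -
  let ?a = "sorted_list_of_set X ! t"
  have a: "?a \<in> X" using assms nth_mem[of t "sorted_list_of_set X"] by simp
  have r: "card {z\<in>X. z < ?a} = t" by (rule card_less_nth_sorted_list_of_set[OF assms])
  show ?thesis
  proof
    assume "?a \<le> v"
    then have "insert ?a {z\<in>X. z < ?a} \<subseteq> {z\<in>X. z \<le> v}" using a by auto
    then have "card (insert ?a {z\<in>X. z < ?a}) \<le> card {z\<in>X. z \<le> v}"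
      using assms(1) by (intro card_mono) auto
    then show "t < card {z\<in>X. z \<le> v}" using r assms(1) by simp
  next
    assume t: "t < card {z\<in>X. z \<le> v}"
    show "?a \<le> v"
    proof (rule ccontr)
      assume "\<not> ?a \<le> v"
      then have "card {z\<in>X. z \<le> v} \<le> card {z\<in>X. z < ?a}"
        using assms(1) by (intro card_mono) auto
      then show False using t r by simp
    qed
  qed
qed

lemma leq_p_iff_count:
  assumes "finite X" "finite Y"
  shows "leq_p X Y \<longleftrightarrow> card X = card Y \<and> (\<forall>v. card {y\<in>Y. y \<le> v} \<le> card {x\<in>X. x \<le> v})"
proof
  assume le: "leq_p X Y"
  then have c: "card X = card Y" by (simp add: leq_p_def)
  have "card {y\<in>Y. y \<le> v} \<le> card {x\<in>X. x \<le> v}" for v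
  proof (cases "card {y\<in>Y. y \<le> v}")
    case 0
    then show ?thesis by linarith
  next
    case (Suc t)
    have "card {y\<in>Y. y \<le> v} \<le> card Y" using assms(2) by (intro card_mono) auto
    then have t: "t < card Y" using Suc by simp
    then have "sorted_list_of_set Y ! t \<le> v"
      using nth_sorted_list_of_set_le_iff[OF assms(2)] Suc by simp
    moreover have "sorted_list_of_set X ! t \<le> sorted_list_of_set Y ! t"
      using le t c by (simp add: leq_p_def)
    ultimately show ?thesis using nth_sorted_list_of_set_le_iff[OF assms(1), of t v] t c Suc by simp
  qed
  then show "card X = card Y \<and> (\<forall>v. card {y\<in>Y. y \<le> v} \<le> card {x\<in>X. x \<le> v})" using c by blast
next
  assume count: "card X = card Y \<and> (\<forall>v. card {y\<in>Y. y \<le> v} \<le> card {x\<in>X. x \<le> v})"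
  show "leq_p X Y"
    unfolding leq_p_def
  proof (intro conjI allI impI)
    fix t assume t: "t < card X"
    let ?v = "sorted_list_of_set Y ! t"
    have "t < card {y\<in>Y. y \<le> ?v}" using nth_sorted_list_of_set_le_iff[OF assms(2), of t ?v] t count by simp
    then have "t < card {x\<in>X. x \<le> ?v}" using count by (meson less_le_trans)
    then show "sorted_list_of_set X ! t \<le> ?v" using nth_sorted_list_of_set_le_iff[OF assms(1) t] by simp
  qed (use count in simp)
qed

lemma card_le_plus_card_greater:
  assumes "finite X"
  shows "card {x\<in>X. x \<le> v} + card {x\<in>X. v < x} = card (X :: nat set)"
proof -
  have "X = {x\<in>X. x \<le> v} \<union> {x\<in>X. v < x}" by auto
  then show ?thesis using assms by (metis (no_types, lifting) card_Un_disjoint disjoint_iff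
        finite_Un mem_Collect_eq not_le)
qed

lemma card_pair_interval:
  assumes "Suc a < b" "b \<le> e"
  shows "card ({a, Suc a} \<union> {b..e}) = e + 3 - b"
proof -
  have "card ({a, Suc a} \<union> {b..e}) = card {a, Suc a} + card {b..e}"
    using assms by (intro card_Un_disjoint) auto
  then show ?thesis using assms by simp
qed

lemma count_pair_interval_le:
  assumes X: "finite X" "card X = e + 3 - b" "\<exists>x\<in>X. x \<le> a" "2 \<le> card {x\<in>X. x \<le> Suc a}"
      "X \<subseteq> {..e}"
    and ab: "Suc a < b" "b \<le> e"
  shows "card {y\<in>{a, Suc a} \<union> {b..e}. y \<le> v} \<le> card {x\<in>X. x \<le> v}" (is "card {y\<in>?Y. _} \<le> _")
proof -
  consider "v < a" | "v = a" | "a < v" "v < b" | "b \<le> v" by linarith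
  then show ?thesis
  proof cases
    case 1
    then have "{y\<in>?Y. y \<le> v} = {}" using ab by auto
    then show ?thesis by (metis card.empty le0)
  next
    case 2
    then have "{x\<in>X. x \<le> v} \<noteq> {}" using X(3) by auto
    then have "0 < card {x\<in>X. x \<le> v}" using X(1) by (simp add: card_gt_0_iff)
    moreover have "{y\<in>?Y. y \<le> v} = {a}" using 2 ab by auto
    ultimately show ?thesis by simp
  next
    case 3
    have "card {y\<in>?Y. y \<le> v} \<le> card {a, Suc a}" using 3 by (intro card_mono) auto
    also have "\<dots> \<le> card {x\<in>X. x \<le> Suc a}" using X(4) by simp
    also have "\<dots> \<le> card {x\<in>X. x \<le> v}" using 3 X(1) by (intro card_mono) auto
    finally show ?thesis .
  next
    case 4
    have "card {x\<in>X. v < x} \<le> card {v<..e}" using X(5) by (intro card_mono) auto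
    moreover have "{y\<in>?Y. v < y} = {v<..e}" using 4 ab by auto
    ultimately show ?thesis
      using card_le_plus_card_greater[OF X(1), of v] card_le_plus_card_greater[of ?Y v]
        card_pair_interval[OF ab] X(2) by simp
  qed
qed

lemma leq_p_pair_interval_iff:
  assumes X: "finite X" "card X = e + 3 - b" and ab: "Suc a < b" "b \<le> e"
  shows "leq_p X ({a, Suc a} \<union> {b..e}) \<longleftrightarrow>
    (\<exists>x\<in>X. x \<le> a) \<and> 2 \<le> card {x\<in>X. x \<le> Suc a} \<and> X \<subseteq> {..e}"
    (is "leq_p X ?Y \<longleftrightarrow> ?low \<and> ?two \<and> ?up")
proof
  assume "leq_p X ?Y"
  then have le: "\<And>v. card {y\<in>?Y. y \<le> v} \<le> card {x\<in>X. x \<le> v}"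
    using leq_p_iff_count[OF X(1), of ?Y] by simp
  have "{y\<in>?Y. y \<le> a} = {a}" "{y\<in>?Y. y \<le> Suc a} = {a, Suc a}" "{y\<in>?Y. y \<le> e} = ?Y"
    using ab by auto
  note le_at = le[of a, unfolded this(1)] le[of "Suc a", unfolded this(2)] le[of e, unfolded this(3)]
  have "1 \<le> card {x\<in>X. x \<le> a}" using le_at(1) by simp
  then have ?low by (metis (mono_tags, lifting) card.empty empty_Collect_eq not_one_le_zero)
  moreover have ?two using le_at(2) by simp
  moreover have "card X \<le> card {x\<in>X. x \<le> e}" using le_at(3) X card_pair_interval[OF ab] by simp
  then have "{x\<in>X. x \<le> e} = X" using X(1) card_seteq[of X "{x\<in>X. x \<le> e}"] by auto
  then have ?up by auto
  ultimately show "?low \<and> ?two \<and> ?up" by blast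
next
  assume "?low \<and> ?two \<and> ?up"
  then have "card {y\<in>?Y. y \<le> v} \<le> card {x\<in>X. x \<le> v}" for v
    using count_pair_interval_le[OF X _ _ _ ab] by blast
  then show "leq_p X ?Y" using leq_p_iff_count[OF X(1), of ?Y] X(2) card_pair_interval[OF ab] by simp
qed

lemma two_le_card_le_Suc:
  assumes "finite X" "paired X" "x \<in> X" "x \<le> a"
  shows "2 \<le> card {z\<in>X. z \<le> Suc a}"
proof -
  have "X \<noteq> {}" using assms(3) by auto
  then have "Min X \<in> X" "Min X \<le> x" using assms(1,3) by auto
  moreover have "Suc (Min X) \<in> X" using paired_Suc_Min assms(1,2) calculation(1) by simp
  ultimately have "{Min X, Suc (Min X)} \<subseteq> {z\<in>X. z \<le> Suc a}" using assms(4) by auto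
  then have "card {Min X, Suc (Min X)} \<le> card {z\<in>X. z \<le> Suc a}" using assms(1) by (intro card_mono) auto
  then show ?thesis by simp
qed

lemma leq_p_pair_interval_iff_paired:
  assumes "finite X" "paired X" "card X = e + 3 - b" "Suc a < b" "b \<le> e"
  shows "leq_p X ({a, Suc a} \<union> {b..e}) \<longleftrightarrow> (\<exists>x\<in>X. x \<le> a) \<and> X \<subseteq> {..e}"
  using leq_p_pair_interval_iff[OF assms(1,3-5)] two_le_card_le_Suc[OF assms(1,2)] by blast

lemma mem_bdry_facetsI:
  assumes "finite G" "\<forall>F\<in>Fs. card F = Suc (card G)" "insert x0 G \<in> Fs" "x0 \<notin> G"
    and unique: "\<And>x. x \<notin> G \<Longrightarrow> insert x G \<in> Fs \<Longrightarrow> x = x0"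
  shows "G \<in> bdry_facets Fs"
proof -
  have "{F \<in> Fs. G \<subseteq> F} = {insert x0 G}"
  proof (intro set_eqI iffI)
    fix F assume F: "F \<in> {F \<in> Fs. G \<subseteq> F}"
    then have "card (F - G) = 1" using assms(1,2) by (simp add: card_Diff_subset)
    then obtain x where "F - G = {x}" by (rule card_1_singletonE)
    then have "F = insert x G" "x \<notin> G" using F by auto
    then show "F \<in> {insert x0 G}" using unique F by auto
  qed (use assms(3) in auto)
  moreover have "card G + 1 = card (insert x0 G)" using assms(1,4) by simp
  ultimately show ?thesis unfolding bdry_facets_def using assms(3) by auto
qed

lemma Fam_of_mem_BS_facets: "F \<in> BS_facets k n S \<Longrightarrow> F \<in> Fam k 1 n"
  unfolding BS_facets_def B_facets_def by blast

lemma card_BS_facets: "F \<in> BS_facets k n S \<Longrightarrow> card F = 2 * k"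
  using FamD[OF Fam_of_mem_BS_facets] by blast

lemma mem_bdry_facets_BS_facetsI:
  assumes "finite G" "card G + 1 = 2 * k" "insert x0 G \<in> BS_facets k n S" "x0 \<notin> G"
    and "\<And>x. x \<notin> G \<Longrightarrow> insert x G \<in> BS_facets k n S \<Longrightarrow> x = x0"
  shows "G \<in> bdry_facets (BS_facets k n S)"
proof (rule mem_bdry_facetsI[OF assms(1) _ assms(3,4)])
  show "\<forall>F\<in>BS_facets k n S. card F = Suc (card G)" using card_BS_facets assms(2) by fastforce
qed (rule assms(5))

lemma image_pred_pair_interval:
  assumes "0 < a" "0 < b" "b \<le> e"
  shows "(\<lambda>x. x - 1) ` ({a, Suc a} \<union> {b..e}) = {a - 1, a} \<union> {b - 1..e - 1}"
proof -
  obtain a' b' e' where "a = Suc a'" "b = Suc b'" "e = Suc e'"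
    using assms gr0_implies_Suc less_le_trans by metis
  moreover have "(\<lambda>x. x - 1) ` Suc ` {b'..e'} = {b'..e'}"
    by (simp only: image_image diff_Suc_1 image_ident)
  ultimately show ?thesis by (simp add: image_Un)
qed

lemma index_bound:
  fixes k n i :: nat
  assumes "2 * k \<le> n" "i \<le> n div 2 - k + 1"
  shows "2 * i + 2 * k \<le> n + 2"
  using assms by linarith

lemma mem_B_facets_A_iff:
  assumes k: "2 \<le> k" "2 * k \<le> n" and X: "X \<in> Fam k 1 n"
  shows "X \<in> B_facets k n (A_anti k n) \<longleftrightarrow>
    (\<exists>i. 1 \<le> i \<and> i \<le> n div 2 - k + 1 \<and> (\<exists>x\<in>X. x \<le> i) \<and> X \<subseteq> {..n - i + 1})"
proof -
  have Xp: "finite X" "paired X" "card X = 2 * k" using FamD[OF X] by auto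
  have leq: "leq_p X ({i, i + 1} \<union> {n + 4 - 2 * k - i..n - i + 1}) \<longleftrightarrow>
      (\<exists>x\<in>X. x \<le> i) \<and> X \<subseteq> {..n - i + 1}"
    if "i \<le> n div 2 - k + 1" for i
    using leq_p_pair_interval_iff_paired[OF Xp(1,2), of "n - i + 1" "n + 4 - 2 * k - i" i]
      index_bound[OF k(2) that] k Xp(3) by simp
  have "X \<in> B_facets k n (A_anti k n) \<longleftrightarrow>
      (\<exists>i. 1 \<le> i \<and> i \<le> n div 2 - k + 1 \<and> leq_p X ({i, i + 1} \<union> {n + 4 - 2 * k - i..n - i + 1}))"
    using X unfolding B_facets_def A_anti_def by blast
  then show ?thesis using leq by blast
qed

lemma shift_down_A_anti:
  assumes "2 \<le> k" "2 * k \<le> n"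
  shows "shift_down (A_anti k n) =
    {{i - 1, i} \<union> {n + 3 - 2 * k - i..n - i} | i. 2 \<le> i \<and> i \<le> n div 2 - k + 1}"
proof -
  define F where "F i = {i, i + 1} \<union> {n + 4 - 2 * k - i..n - i + 1}" for i
  have Min: "Min (F i) = i" if "i \<le> n div 2 - k + 1" for i
    unfolding F_def using index_bound[OF assms(2) that] by (intro Min_eqI) auto
  have image: "(\<lambda>x. x - 1) ` F i = {i - 1, i} \<union> {n + 3 - 2 * k - i..n - i}"
    if "1 \<le> i" "i \<le> n div 2 - k + 1" for i
  proof -
    have "(\<lambda>x. x - 1) ` F i = {i - 1, i} \<union> {n + 4 - 2 * k - i - 1..n - i + 1 - 1}"
      unfolding F_def using image_pred_pair_interval[of i "n + 4 - 2 * k - i" "n - i + 1"]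
        that index_bound[OF assms(2) that(2)] assms(1) by simp
    then show ?thesis by (simp add: add.commute)
  qed
  have A: "A_anti k n = {F i | i. 1 \<le> i \<and> i \<le> n div 2 - k + 1}"
    unfolding A_anti_def F_def by simp
  show ?thesis
  proof (intro set_eqI iffI)
    fix Y assume "Y \<in> shift_down (A_anti k n)"
    then obtain i where i: "1 \<le> i" "i \<le> n div 2 - k + 1" "Min (F i) > 1" "Y = (\<lambda>x. x - 1) ` F i"
      unfolding shift_down_def A by blast
    then have "2 \<le> i" using Min[OF i(2)] by simp
    moreover have "Y = {i - 1, i} \<union> {n + 3 - 2 * k - i..n - i}" using image[OF i(1,2)] i(4) by simp
    ultimately show "Y \<in> {{i - 1, i} \<union> {n + 3 - 2 * k - i..n - i} | i. 2 \<le> i \<and> i \<le> n div 2 - k + 1}"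
      using i(2) by blast
  next
    fix Y assume "Y \<in> {{i - 1, i} \<union> {n + 3 - 2 * k - i..n - i} | i. 2 \<le> i \<and> i \<le> n div 2 - k + 1}"
    then obtain i where i: "2 \<le> i" "i \<le> n div 2 - k + 1" "Y = {i - 1, i} \<union> {n + 3 - 2 * k - i..n - i}"
      by blast
    then have "Y = (\<lambda>x. x - 1) ` F i" "F i \<in> A_anti k n" "Min (F i) > 1"
      using image[of i] Min[OF i(2)] unfolding A by auto
    then show "Y \<in> shift_down (A_anti k n)" unfolding shift_down_def by blast
  qed
qed

lemma mem_B_facets_shift_A_iff:
  assumes k: "2 \<le> k" "2 * k \<le> n" and X: "X \<in> Fam k 1 n"
  shows "X \<in> B_facets k n (shift_down (A_anti k n)) \<longleftrightarrow>
    (\<exists>i. 2 \<le> i \<and> i \<le> n div 2 - k + 1 \<and> (\<exists>x\<in>X. x < i) \<and> X \<subseteq> {..n - i})"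
proof -
  have Xp: "finite X" "paired X" "card X = 2 * k" using FamD[OF X] by auto
  have leq: "leq_p X ({i - 1, i} \<union> {n + 3 - 2 * k - i..n - i}) \<longleftrightarrow> (\<exists>x\<in>X. x < i) \<and> X \<subseteq> {..n - i}"
    if "2 \<le> i" "i \<le> n div 2 - k + 1" for i
  proof -
    have "leq_p X ({i - 1, Suc (i - 1)} \<union> {n + 3 - 2 * k - i..n - i}) \<longleftrightarrow>
        (\<exists>x\<in>X. x \<le> i - 1) \<and> X \<subseteq> {..n - i}"
      using index_bound[OF k(2) that(2)] k that(1) Xp
      by (intro leq_p_pair_interval_iff_paired) auto
    moreover have "x \<le> i - 1 \<longleftrightarrow> x < i" for x using that(1) by linarith
    ultimately show ?thesis using that(1) by (simp add: Suc_diff_le)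
  qed
  have "X \<in> B_facets k n (shift_down (A_anti k n)) \<longleftrightarrow>
      (\<exists>i. 2 \<le> i \<and> i \<le> n div 2 - k + 1 \<and> leq_p X ({i - 1, i} \<union> {n + 3 - 2 * k - i..n - i}))"
    using X unfolding B_facets_def shift_down_A_anti[OF k] by blast
  then show ?thesis using leq by blast
qed

lemma mem_BS_facets_A_iff:
  assumes "2 \<le> k" "2 * k \<le> n"
  shows "X \<in> BS_facets k n (A_anti k n) \<longleftrightarrow> X \<in> Fam k 1 n \<and>
    (\<exists>i. 1 \<le> i \<and> i \<le> n div 2 - k + 1 \<and> (\<exists>x\<in>X. x \<le> i) \<and> X \<subseteq> {..n - i + 1}) \<and>
    \<not> (\<exists>i. 2 \<le> i \<and> i \<le> n div 2 - k + 1 \<and> (\<exists>x\<in>X. x < i) \<and> X \<subseteq> {..n - i})"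
proof (cases "X \<in> Fam k 1 n")
  case True
  then show ?thesis unfolding BS_facets_def
    using mem_B_facets_A_iff[OF assms True] mem_B_facets_shift_A_iff[OF assms True] by simp
qed (simp add: BS_facets_def B_facets_def)

lemma mem_BS_facets_AI:
  assumes k: "2 \<le> k" "2 * k \<le> n" and X: "X \<in> Fam k 1 n"
    and i: "1 \<le> i" "i \<le> n div 2 - k + 1" "i \<in> X" "\<forall>x\<in>X. i \<le> x" "X \<subseteq> {..n - i + 1}"
    and top: "n - i \<in> X \<or> i = n div 2 - k + 1"
  shows "X \<in> BS_facets k n (A_anti k n)"
  unfolding mem_BS_facets_A_iff[OF k]
proof (intro conjI notI)
  show "\<exists>i. 1 \<le> i \<and> i \<le> n div 2 - k + 1 \<and> (\<exists>x\<in>X. x \<le> i) \<and> X \<subseteq> {..n - i + 1}"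
    using i by blast
  assume "\<exists>j. 2 \<le> j \<and> j \<le> n div 2 - k + 1 \<and> (\<exists>x\<in>X. x < j) \<and> X \<subseteq> {..n - j}"
  then obtain j x where j: "j \<le> n div 2 - k + 1" "x \<in> X" "x < j" "X \<subseteq> {..n - j}" by blast
  have "i < j" using i(4) j(2,3) by fastforce
  moreover have "j \<le> n" using index_bound[OF k(2) j(1)] k(1) by linarith
  ultimately show False using top j(1,4) by auto
qed (rule X)

lemma mem_BS_facets_A_bounds:
  assumes k: "2 \<le> k" "2 * k \<le> n" and F: "F \<in> BS_facets k n (A_anti k n)"
    and "\<forall>z\<in>F. a \<le> z" "y \<in> F"
  shows "a \<le> n div 2 - k + 1 \<and> a + y \<le> n + 1"
proof -
  obtain i x where i: "i \<le> n div 2 - k + 1" "x \<in> F" "x \<le> i" "F \<subseteq> {..n - i + 1}"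
    using F unfolding mem_BS_facets_A_iff[OF k] by blast
  have "a \<le> i" using assms(4) i(2,3) by fastforce
  moreover have "i \<le> n" using index_bound[OF k(2) i(1)] k(1) by linarith
  ultimately show ?thesis using i(1,4) assms(5) by auto
qed

lemma not_mem_BS_facets_A_shifted:
  assumes k: "2 \<le> k" "2 * k \<le> n" and F: "F \<in> BS_facets k n (A_anti k n)"
    and "2 \<le> i" "i \<le> n div 2 - k + 1" "x \<in> F" "x < i" "F \<subseteq> {..n - i}"
  shows False
  using F assms(4-) unfolding mem_BS_facets_A_iff[OF k] by blast

lemma insert_top_mem_bdry:
  assumes k: "2 \<le> k" "2 * k \<le> n" and i: "1 \<le> i" "i \<le> n div 2 - k + 1"
    and P: "finite P" "card P = 2 * k - 2" "paired P" "\<forall>p\<in>P. i \<le> p \<and> p \<le> n - i" "i \<in> P"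
  shows "insert (n - i + 1) P \<in> bdry_facets (BS_facets k n (A_anti k n))"
proof -
  let ?L = "n - i + 1" and ?G = "insert (n - i + 1) P"
  have bnd: "2 * i + 2 * k \<le> n + 2" using index_bound[OF k(2) i(2)] .
  have PL: "\<forall>p\<in>P. p < ?L" using P(4) by auto
  have "\<not> {i..n - i} \<subseteq> P" using card_mono[OF P(1), of "{i..n - i}"] P(2) bnd k(1) by auto
  then obtain y where "y \<in> {i..n - i}" "y \<notin> P" by blast
  then have y: "i \<le> y" "y < ?L" by auto
  obtain x0 where x0: "y \<le> x0" "x0 < ?L" "x0 \<notin> P" "?L - 1 \<in> insert x0 P"
    and paired_X0: "paired (insert x0 ?G)"
    and unique: "\<And>x. x < ?L \<Longrightarrow> x \<notin> P \<Longrightarrow> paired (insert x ?G) \<Longrightarrow> x = x0"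
    using paired_completion_below[OF P(1,3) PL y(2) \<open>y \<notin> P\<close>] by metis
  have "i \<le> x0" using x0(1) y(1) by simp
  have x0G: "x0 \<notin> ?G" and cardG: "card ?G + 1 = 2 * k" using P(1,2) PL x0 k by auto
  moreover have "insert x0 ?G \<subseteq> {1..n}" using P(4) x0(2) \<open>i \<le> x0\<close> i(1) by auto
  ultimately have X0: "insert x0 ?G \<in> Fam k 1 n" using P(1) paired_X0 k(1) by (intro FamI) auto
  have BS: "insert x0 ?G \<in> BS_facets k n (A_anti k n)"
    using P(4,5) x0(2,4) \<open>i \<le> x0\<close> by (intro mem_BS_facets_AI[OF k X0 i]) auto
  show ?thesis
  proof (rule mem_bdry_facets_BS_facetsI[OF _ cardG BS x0G])
    show "finite ?G" using P(1) by simp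
    fix x assume x: "x \<notin> ?G" "insert x ?G \<in> BS_facets k n (A_anti k n)"
    show "x = x0"
    proof (cases "x < ?L")
      case True
      then show ?thesis using unique x(1) FamD[OF Fam_of_mem_BS_facets[OF x(2)]] by simp
    next
      case False
      then have "?L < x" using x(1) by auto
      moreover have "i \<le> n - i" using bnd k(1) by linarith
      ultimately have "\<forall>z\<in>insert x ?G. i \<le> z" using P(4) by auto
      then have "i + x \<le> n + 1" using mem_BS_facets_A_bounds[OF k x(2)] by blast
      then show ?thesis using \<open>?L < x\<close> \<open>i \<le> n - i\<close> by linarith
    qed
  qed
qed

lemma pair_H_top_mem_bdry:
  assumes k: "3 \<le> k" "2 * k + 1 \<le> n" and i: "1 \<le> i" "i \<le> n div 2 - k + 1"
    and H: "H \<in> Fam (k - 2) (i + 2) (n - i)"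
  shows "{i, i + 1} \<union> H \<union> {n - i + 1} \<in> bdry_facets (BS_facets k n (A_anti k n))"
proof -
  let ?P = "{i, Suc i} \<union> H"
  have "Suc (k - 2) = k - 1" using k(1) by simp
  then have "?P \<in> Fam (k - 1) i (n - i)" using Fam_pair_Un[OF H] by simp
  from FamD[OF this]
  have "finite ?P" "card ?P = 2 * k - 2" "paired ?P" "\<forall>p\<in>?P. i \<le> p \<and> p \<le> n - i" "i \<in> ?P"
    by auto
  then have "insert (n - i + 1) ?P \<in> bdry_facets (BS_facets k n (A_anti k n))"
    using k i by (intro insert_top_mem_bdry) auto
  moreover have "{i, i + 1} \<union> H \<union> {n - i + 1} = insert (n - i + 1) ?P" by auto
  ultimately show ?thesis by simp
qed

lemma insert_one_mem_bdry:
  assumes k: "2 \<le> k" "2 * k \<le> n"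
    and P: "finite P" "card P = 2 * k - 2" "paired P" "\<forall>p\<in>P. 2 \<le> p \<and> p \<le> n" "n - 1 \<in> P"
  shows "insert 1 P \<in> bdry_facets (BS_facets k n (A_anti k n))"
proof -
  have P1: "\<forall>p\<in>P. 1 < p" using P(4) by auto
  have "\<not> {2..n} \<subseteq> P" using card_mono[OF P(1), of "{2..n}"] P(2) k by auto
  then obtain y where "y \<in> {2..n}" "y \<notin> P" by blast
  then have y: "1 < y" "y \<le> n" by auto
  obtain x0 where x0: "1 < x0" "x0 \<le> y" "x0 \<notin> P"
    and paired_X0: "paired (insert x0 (insert 1 P))"
    and unique: "\<And>x. 1 < x \<Longrightarrow> x \<notin> P \<Longrightarrow> paired (insert x (insert 1 P)) \<Longrightarrow> x = x0"
    using paired_completion_above[OF P(1,3) P1 y(1) \<open>y \<notin> P\<close>] by metis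
  have x0G: "x0 \<notin> insert 1 P" and cardG: "card (insert 1 P) + 1 = 2 * k" using P(1,2) P1 x0 k by auto
  moreover have sub: "insert x0 (insert 1 P) \<subseteq> {1..n}" using P(4) x0(1,2) y(2) by auto
  ultimately have X0: "insert x0 (insert 1 P) \<in> Fam k 1 n" using P(1) paired_X0 k(1) by (intro FamI) auto
  have BS: "insert x0 (insert 1 P) \<in> BS_facets k n (A_anti k n)"
    using sub P(5) by (intro mem_BS_facets_AI[OF k X0, where i = 1]) auto
  show ?thesis
  proof (rule mem_bdry_facets_BS_facetsI[OF _ cardG BS x0G])
    show "finite (insert 1 P)" using P(1) by simp
    fix x assume x: "x \<notin> insert 1 P" "insert x (insert 1 P) \<in> BS_facets k n (A_anti k n)"
    then have "paired (insert x (insert 1 P))" "insert x (insert 1 P) \<subseteq> {1..n}"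
      using FamD[OF Fam_of_mem_BS_facets] by blast+
    moreover have "1 < x" using calculation(2) x(1) by auto
    ultimately show "x = x0" using unique x(1) by simp
  qed
qed

lemma one_H_end_pair_mem_bdry:
  assumes k: "3 \<le> k" "2 * k + 1 \<le> n" and H: "H \<in> Fam (k - 2) 2 (n - 2)"
  shows "{1} \<union> H \<union> {n - 1, n} \<in> bdry_facets (BS_facets k n (A_anti k n))"
proof -
  let ?P = "H \<union> {n - 1, n}"
  have "Suc (k - 2) = k - 1" "Suc (n - 1) = n" using k by auto
  then have "?P \<in> Fam (k - 1) 2 n" using Fam_Un_pair[OF H, of "n - 1"] k by simp
  from FamD[OF this]
  have "finite ?P" "card ?P = 2 * k - 2" "paired ?P" "\<forall>p\<in>?P. 2 \<le> p \<and> p \<le> n" "n - 1 \<in> ?P"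
    by auto
  then have "insert 1 ?P \<in> bdry_facets (BS_facets k n (A_anti k n))"
    using k by (intro insert_one_mem_bdry) auto
  moreover have "{1} \<union> H \<union> {n - 1, n} = insert 1 ?P" by auto
  ultimately show ?thesis by simp
qed

lemma two_pairs_mem_BS_facets:
  assumes k: "2 \<le> k" "2 * k \<le> n" and i: "1 \<le> i" "i \<le> n div 2 - k + 1"
    and H: "H \<in> Fam (k - 2) (i + 2) b" "b < c" and c: "n - i - 1 \<le> c" "c \<le> n - i"
  shows "{i, i + 1} \<union> H \<union> {c, c + 1} \<in> BS_facets k n (A_anti k n)"
proof -
  have "{i, Suc i} \<union> (H \<union> {c, Suc c}) \<in> Fam (Suc (Suc (k - 2))) i (Suc c)"
    using Fam_pair_Un[OF Fam_Un_pair[OF H]] by simp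
  moreover have "Suc (Suc (k - 2)) = k" using k(1) by simp
  ultimately have X: "{i, i + 1} \<union> H \<union> {c, c + 1} \<in> Fam k i (c + 1)" by (simp add: Un_assoc)
  then have X0: "{i, i + 1} \<union> H \<union> {c, c + 1} \<in> Fam k 1 n"
    using c i(1) index_bound[OF k(2) i(2)] k by (elim Fam_mono) auto
  have "\<forall>x\<in>{i, i + 1} \<union> H \<union> {c, c + 1}. i \<le> x \<and> x \<le> c + 1" using FamD[OF X] by auto
  then show ?thesis using c by (intro mem_BS_facets_AI[OF k X0 i]) auto
qed

lemma insert_below_top_unique:
  assumes k: "2 \<le> k" "2 * k \<le> n" and i: "1 \<le> i" "i \<le> n div 2 - k + 1"
    and Q: "finite Q" "card Q = 2 * k - 2" "\<forall>q\<in>Q. i \<le> q \<and> q < n - i - 1" "i \<in> Q"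
    and x: "x \<notin> insert (n - i - 1) Q" and F: "insert x (insert (n - i - 1) Q) \<in> BS_facets k n (A_anti k n)"
  shows "x = n - i"
proof -
  let ?F = "insert x (insert (n - i - 1) Q)"
  have Fp: "paired ?F" "?F \<subseteq> {1..n}" using FamD[OF Fam_of_mem_BS_facets[OF F]] by blast+
  have "i < n - i - 1" using Q(3,4) by blast
  consider "n - i - 1 < x" | "x < i" | "i < x" "x < n - i - 1" using x Q(4) by fastforce
  then show ?thesis
  proof cases
    case 1
    then have "{z\<in>?F. z < n - i - 1} = Q" using Q(3) by auto
    then have "even (rank ?F (n - i - 1))" using Q(2) k(1) by (simp add: rank_def)
    then have "Suc (n - i - 1) \<in> ?F" using paired_Suc_mem[OF Fp(1)] by blast
    then show ?thesis using Q(3) 1 \<open>i < n - i - 1\<close> by auto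
  next
    case 2
    have "?F \<subseteq> {..n - i}" using Q(3) 2 \<open>i < n - i - 1\<close> by fastforce
    moreover have "2 \<le> i" using 2 Fp(2) by auto
    ultimately show ?thesis using not_mem_BS_facets_A_shifted[OF k F _ i(2), of x] 2 by blast
  next
    case 3
    have Fr: "\<forall>z\<in>?F. i \<le> z \<and> z \<le> n - i - 1" using Q(3) 3 by auto
    show ?thesis
    proof (cases "i + 1 \<le> n div 2 - k + 1")
      case True
      moreover have "?F \<subseteq> {..n - (i + 1)}" using Fr by auto
      ultimately show ?thesis using not_mem_BS_facets_A_shifted[OF k F, of "i + 1" i] Q(4) i(1) by auto
    next
      case False
      have "card ?F \<le> card {i..n - i - 1}" using Fr by (intro card_mono) auto
      then have "2 * k \<le> n - i - 1 + 1 - i" using Q(1,2,3) x k(1) by auto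
      then show ?thesis using False i(2) k by linarith
    qed
  qed
qed

lemma pair_H_below_top_mem_bdry:
  assumes k: "3 \<le> k" "2 * k + 1 \<le> n" and i: "1 \<le> i" "i \<le> n div 2 - k + 1"
    and H: "H \<in> Fam (k - 2) (i + 2) (n - i - 2)"
  shows "{i, i + 1} \<union> H \<union> {n - i - 1} \<in> bdry_facets (BS_facets k n (A_anti k n))"
proof -
  have k2: "2 \<le> k" "2 * k \<le> n" using k by auto
  have bnd: "2 * i + 2 * k \<le> n + 2" using index_bound[OF k2(2) i(2)] .
  have Hp: "finite H" "card H = 2 * (k - 2)" "\<forall>h\<in>H. i + 2 \<le> h \<and> h \<le> n - i - 2"
    using FamD[OF H] by auto
  define Q where "Q = {i, Suc i} \<union> H"
  define G where "G = insert (n - i - 1) Q"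
  have "card Q = 2 * k - 2" using Hp k(1) unfolding Q_def by (subst card_Un_disjoint) auto
  moreover have "finite Q" "\<forall>q\<in>Q. i \<le> q \<and> q < n - i - 1" "i \<in> Q"
    using Hp bnd k(1) unfolding Q_def by auto
  ultimately have Q: "finite Q" "card Q = 2 * k - 2" "\<forall>q\<in>Q. i \<le> q \<and> q < n - i - 1" "i \<in> Q"
    by blast+
  have x0G: "n - i \<notin> G" using Q(3) bnd k(1) unfolding G_def by fastforce
  have cardG: "card G + 1 = 2 * k" using Q k(1) unfolding G_def by auto
  have "{i, i + 1} \<union> H \<union> {n - i - 1, n - i - 1 + 1} \<in> BS_facets k n (A_anti k n)"
    using bnd k by (intro two_pairs_mem_BS_facets[OF k2 i H]) auto
  moreover have "{i, i + 1} \<union> H \<union> {n - i - 1, n - i - 1 + 1} = insert (n - i) G"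
    using bnd k(1) unfolding G_def Q_def by auto
  ultimately have BS: "insert (n - i) G \<in> BS_facets k n (A_anti k n)" by simp
  have "G \<in> bdry_facets (BS_facets k n (A_anti k n))"
  proof (rule mem_bdry_facets_BS_facetsI[OF _ cardG BS x0G])
    show "finite G" using Q(1) unfolding G_def by simp
  qed (use insert_below_top_unique[OF k2 i Q] in \<open>simp add: G_def\<close>)
  moreover have "{i, i + 1} \<union> H \<union> {n - i - 1} = G" unfolding G_def Q_def by auto
  ultimately show ?thesis by simp
qed

lemma succ_H_top_pair_mem_bdry:
  assumes k: "3 \<le> k" "2 * k + 1 \<le> n" and i: "1 \<le> i" "i \<le> n div 2 - k + 1"
    and H: "H \<in> Fam (k - 2) (i + 2) (n - i - 1)"
  shows "{i + 1} \<union> H \<union> {n - i, n - i + 1} \<in> bdry_facets (BS_facets k n (A_anti k n))"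
proof -
  have k2: "2 \<le> k" "2 * k \<le> n" using k by auto
  have bnd: "2 * i + 2 * k \<le> n + 2" using index_bound[OF k2(2) i(2)] .
  have Hp: "finite H" "card H = 2 * (k - 2)" "\<forall>h\<in>H. i + 2 \<le> h \<and> h \<le> n - i - 1"
    using FamD[OF H] by auto
  define G where "G = {i + 1} \<union> H \<union> {n - i, n - i + 1}"
  have Gr: "\<forall>z\<in>G. i + 1 \<le> z" using Hp(3) bnd k(1) unfolding G_def by auto
  have x0G: "i \<notin> G" using Gr by fastforce
  have "i + 1 \<notin> H" "n - i \<notin> H" "n - i + 1 \<notin> H" using Hp(3) by fastforce+
  then have cardG: "card G + 1 = 2 * k" using Hp(1,2) bnd k(1) unfolding G_def by simp
  have "{i, i + 1} \<union> H \<union> {n - i, n - i + 1} \<in> BS_facets k n (A_anti k n)"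
    using bnd k by (intro two_pairs_mem_BS_facets[OF k2 i H]) auto
  moreover have "{i, i + 1} \<union> H \<union> {n - i, n - i + 1} = insert i G" unfolding G_def by auto
  ultimately have BS: "insert i G \<in> BS_facets k n (A_anti k n)" by simp
  show ?thesis unfolding G_def[symmetric]
  proof (rule mem_bdry_facets_BS_facetsI[OF _ cardG BS x0G])
    show "finite G" using Hp(1) unfolding G_def by simp
    fix x assume x: "x \<notin> G" and F: "insert x G \<in> BS_facets k n (A_anti k n)"
    then have Fp: "paired (insert x G)" using FamD[OF Fam_of_mem_BS_facets] by blast
    show "x = i"
    proof (cases "i + 1 < x")
      case True
      then have "\<forall>z\<in>insert x G. i + 1 \<le> z" using Gr by auto
      moreover have "n - i + 1 \<in> insert x G" unfolding G_def by simp
      ultimately have "i + 1 + (n - i + 1) \<le> n + 1" using mem_BS_facets_A_bounds[OF k2 F] by blast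
      then show ?thesis using bnd by linarith
    next
      case False
      then have "x < i + 1" using x unfolding G_def by (cases "x = i + 1") auto
      then show ?thesis using paired_insert_below_eq[OF Fp _ Gr] by simp
    qed
  qed
qed

lemma low_H_pair_mem_bdry:
  assumes k: "3 \<le> k" "2 * k + 1 \<le> n" and i: "1 \<le> i" "i \<le> n div 2 - k + 1"
    and H: "H \<in> Fam (k - 2) (i + 2) (n - i - 2)"
  shows "{i} \<union> H \<union> {n - i - 1, n - i} \<in> bdry_facets (BS_facets k n (A_anti k n))"
proof -
  have k2: "2 \<le> k" "2 * k \<le> n" using k by auto
  have bnd: "2 * i + 2 * k \<le> n + 2" using index_bound[OF k2(2) i(2)] .
  have Hp: "finite H" "card H = 2 * (k - 2)" "\<forall>h\<in>H. i + 2 \<le> h \<and> h \<le> n - i - 2"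
    using FamD[OF H] by auto
  define G where "G = {i} \<union> H \<union> {n - i - 1, n - i}"
  have Gr: "\<forall>z\<in>G. i \<le> z \<and> z \<le> n - i" using Hp(3) bnd k(1) unfolding G_def by auto
  have x0G: "Suc i \<notin> G" using Hp(3) bnd k(1) unfolding G_def by auto
  have "i \<notin> H" "n - i - 1 \<notin> H" "n - i \<notin> H" "i < n - i - 1" using Hp(3) bnd k(1) by fastforce+
  then have cardG: "card G + 1 = 2 * k" using Hp(1,2) k(1) unfolding G_def by simp
  have "{i, i + 1} \<union> H \<union> {n - i - 1, n - i - 1 + 1} \<in> BS_facets k n (A_anti k n)"
    using bnd k by (intro two_pairs_mem_BS_facets[OF k2 i H]) auto
  moreover have "{i, i + 1} \<union> H \<union> {n - i - 1, n - i - 1 + 1} = insert (Suc i) G"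
    using bnd k(1) unfolding G_def by auto
  ultimately have BS: "insert (Suc i) G \<in> BS_facets k n (A_anti k n)" by simp
  show ?thesis unfolding G_def[symmetric]
  proof (rule mem_bdry_facets_BS_facetsI[OF _ cardG BS x0G])
    show "finite G" using Hp(1) unfolding G_def by simp
    fix x assume x: "x \<notin> G" and F: "insert x G \<in> BS_facets k n (A_anti k n)"
    then have Fp: "paired (insert x G)" "insert x G \<subseteq> {1..n}"
      using FamD[OF Fam_of_mem_BS_facets] by blast+
    show "x = Suc i"
    proof (cases "i < x")
      case True
      then have "Suc i \<in> insert x G" using paired_Suc_Min[OF Fp(1), of i] Gr unfolding G_def by auto
      then show ?thesis using x0G by simp
    next
      case False
      then have "x < i" using x unfolding G_def by (cases "x = i") auto
      moreover have "2 \<le> i" using calculation Fp(2) by auto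
      moreover have "insert x G \<subseteq> {..n - i}" using Gr \<open>x < i\<close> bnd k(1) by auto
      ultimately show ?thesis using not_mem_BS_facets_A_shifted[OF k2 F _ i(2), of x] by blast
    qed
  qed
qed

lemma middle_H_mem_bdry:
  assumes k: "3 \<le> k" "2 * k + 1 \<le> n"
    and H: "H \<in> Fam (k - 1) (n div 2 - k + 3) ((n + 1) div 2 + k)"
  shows "{n div 2 - k + 2} \<union> H \<in> bdry_facets (BS_facets k n (A_anti k n))"
proof -
  have k2: "2 \<le> k" "2 * k \<le> n" using k by auto
  define m where "m = n div 2 - k + 1"
  have m: "1 \<le> m" "n div 2 - k + 2 = Suc m" "n div 2 - k + 3 = Suc m + 1" "(n + 1) div 2 + k \<le> n - m + 1"
    "n - m + 1 \<le> n" "Suc m \<le> n - m"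
    using k unfolding m_def by auto
  have Hp: "finite H" "card H = 2 * (k - 1)" "\<forall>h\<in>H. Suc m + 1 \<le> h \<and> h \<le> n - m + 1"
    using FamD[OF H] m(3,4) by auto
  define G where "G = insert (Suc m) H"
  have Gr: "\<forall>z\<in>G. Suc m \<le> z" using Hp(3) unfolding G_def by auto
  have x0G: "m \<notin> G" using Gr by fastforce
  have "Suc m \<notin> H" using Hp(3) by fastforce
  then have cardG: "card G + 1 = 2 * k" using Hp(1,2) k(1) unfolding G_def by simp
  have "{m, Suc m} \<union> H \<in> Fam (Suc (k - 1)) m ((n + 1) div 2 + k)"
    using Fam_pair_Un[OF H] m(3) by simp
  then have X0: "insert m G \<in> Fam k 1 n" unfolding G_def using m(1,4,5) k(1)
    by (auto elim: Fam_mono simp: Suc_diff_Suc numeral_2_eq_2)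
  have BS: "insert m G \<in> BS_facets k n (A_anti k n)"
  proof (rule mem_BS_facets_AI[OF k2 X0 m(1)])
    show "insert m G \<subseteq> {..n - m + 1}" using Hp(3) m(6) unfolding G_def by auto
  qed (use Gr in \<open>auto simp: m_def\<close>)
  show ?thesis unfolding m(2) G_def[symmetric] Un_insert_left Un_empty_left
  proof (rule mem_bdry_facets_BS_facetsI[OF _ cardG BS x0G])
    show "finite G" using Hp(1) unfolding G_def by simp
    fix x assume x: "x \<notin> G" and F: "insert x G \<in> BS_facets k n (A_anti k n)"
    then have Fp: "paired (insert x G)" using FamD[OF Fam_of_mem_BS_facets] by blast
    show "x = m"
    proof (cases "Suc m < x")
      case True
      then have "\<forall>z\<in>insert x G. Suc m \<le> z" using Gr by auto
      then show ?thesis using mem_BS_facets_A_bounds[OF k2 F, of "Suc m" x] unfolding m_def by simp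
    next
      case False
      then have "x < Suc m" using x unfolding G_def by (cases "x = Suc m") auto
      then show ?thesis using paired_insert_below_eq[OF Fp _ Gr] by simp
    qed
  qed
qed

theorem mainTheorem3:
  fixes k n :: nat
  assumes "k \<ge> 3" and "n \<ge> 2*k + 1"
  defines "D \<equiv> bdry_facets (BS_facets k n (A_anti k n))"
  shows "(\<forall>i H. 1 \<le> i \<and> i \<le> n div 2 - k + 1 \<and> H \<in> Fam (k-2) (i+2) (n-i)
            \<longrightarrow> {i, i+1} \<union> H \<union> {n-i+1} \<in> D)
       \<and> (\<forall>i H. 1 \<le> i \<and> i \<le> n div 2 - k + 1 \<and> H \<in> Fam (k-2) (i+2) (n-i-2)
            \<longrightarrow> {i, i+1} \<union> H \<union> {n-i-1} \<in> D)
       \<and> (\<forall>i H. 1 \<le> i \<and> i \<le> n div 2 - k + 1 \<and> H \<in> Fam (k-2) (i+2) (n-i-1)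
            \<longrightarrow> {i+1} \<union> H \<union> {n-i, n-i+1} \<in> D)
       \<and> (\<forall>i H. 1 \<le> i \<and> i \<le> n div 2 - k + 1 \<and> H \<in> Fam (k-2) (i+2) (n-i-2)
            \<longrightarrow> {i} \<union> H \<union> {n-i-1, n-i} \<in> D)
       \<and> (\<forall>H. H \<in> Fam (k-2) 2 (n-2) \<longrightarrow> {1} \<union> H \<union> {n-1, n} \<in> D)
       \<and> (\<forall>H. H \<in> Fam (k-1) (n div 2 - k + 3) ((n+1) div 2 + k)
            \<longrightarrow> {n div 2 - k + 2} \<union> H \<in> D)"
  using pair_H_top_mem_bdry[OF assms(1,2)] pair_H_below_top_mem_bdry[OF assms(1,2)]
    succ_H_top_pair_mem_bdry[OF assms(1,2)] low_H_pair_mem_bdry[OF assms(1,2)]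
    one_H_end_pair_mem_bdry[OF assms(1,2)] middle_H_mem_bdry[OF assms(1,2)]
  unfolding D_def by blast

end
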